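(* Let $A\in\mathcal M_{dm}(\mathbb C)$ be positive semidefinite, written as a block matrix $A=(A_{ij})_{i,j=1}^m$ with $A_{ij}\in\mathcal M_d(\mathbb C)$. Let $P_i$ ($1\le i\le m$) be the orthogonal projection onto $\mathrm{span}\{e_k:(i-1)d<k\le id\}$ and $\mathcal C_{\mathcal P}(X)=\sum_{i=1}^mP_iXP_i$. Then: (1) there exist a unitary $U\in\mathcal M_{dm}(\mathbb C)$ and a positive semidefinite $D\in\mathcal M_d(\mathbb C)$ such that $\mathcal C_{\mathcal P}(U^*AU)=\frac1m\bigoplus_{i=1}^mD$; (2) with $U,D$ as in (1), there exist rectangular matrices $X_i\in\mathcal M_{dm,d}(\mathbb C)$, $X_i^*=(X_{1i}^*,\dots,X_{mi}^* )$ with $X_{ji}\in\mathcal M_d(\mathbb C)$, and unitaries $U_i\in\mathcal M_{dm}(\mathbb C)$, $1\le i\le m$, such that $$A=\frac1m\sum_{i=1}^mX_iX_i^*\quad\text{and}\quad U_i^*X_iX_i^*U_i=\bigoplus_{j=1}^m\delta_{ij}D,$$ and hence $\mathrm{Tr}_m(U_i^*X_iX_i^*U_i)=\mathrm{Tr}_m(U^*AU)$ for $1\le i\le m$.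
   Context: $\bigoplus_{i=1}^mD$ is the block diagonal matrix with $m$ diagonal blocks equal to $D$; $\bigoplus_{j=1}^m\delta_{ij}D$ is the block diagonal matrix with $D$ in the $i$-th diagonal block and zeros elsewhere. For $C=(C_{ij})_{i,j=1}^m\in\mathcal M_{dm}(\mathbb C)$ with $C_{ij}\in\mathcal M_d(\mathbb C)$, the partial trace is $\mathrm{Tr}_m(C)=\sum_{i=1}^mC_{ii}\in\mathcal M_d(\mathbb C)$. *)

theory Defs
  imports Complex_Main "Jordan_Normal_Form.Matrix"
begin

definition cadj :: "complex mat \<Rightarrow> complex mat" where
  "cadj A = mat (dim_col A) (dim_row A) (\<lambda>(i,j). cnj (A $$ (j,i)))"

definition unitary_mat :: "nat \<Rightarrow> complex mat \<Rightarrow> bool" where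
  "unitary_mat n U \<longleftrightarrow> U \<in> carrier_mat n n \<and> cadj U * U = 1\<^sub>m n \<and> U * cadj U = 1\<^sub>m n"

definition psd_mat :: "nat \<Rightarrow> complex mat \<Rightarrow> bool" where
  "psd_mat n A \<longleftrightarrow> A \<in> carrier_mat n n \<and> cadj A = A \<and>
     (\<forall>v \<in> carrier_vec n. Im (conjugate v \<bullet> (A *\<^sub>v v)) = 0 \<and> Re (conjugate v \<bullet> (A *\<^sub>v v)) \<ge> 0)"

definition msum :: "nat \<Rightarrow> nat \<Rightarrow> (nat \<Rightarrow> complex mat) \<Rightarrow> nat \<Rightarrow> complex mat" where
  "msum r c f m = foldr (\<lambda>i acc. f i + acc) [0..<m] (0\<^sub>m r c)"

(* P_i (0-based i): orthogonal projection onto span{e_k : i*d \<le> k < (i+1)*d} in C^{dm} *)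
definition blockproj :: "nat \<Rightarrow> nat \<Rightarrow> nat \<Rightarrow> complex mat" where
  "blockproj d m i = mat (d*m) (d*m) (\<lambda>(k,l). if k = l \<and> i*d \<le> k \<and> k < (i+1)*d then 1 else 0)"

definition pinching :: "nat \<Rightarrow> nat \<Rightarrow> complex mat \<Rightarrow> complex mat" where
  "pinching d m X = msum (d*m) (d*m) (\<lambda>i. blockproj d m i * X * blockproj d m i) m"

definition blockdiag :: "nat \<Rightarrow> nat \<Rightarrow> (nat \<Rightarrow> complex mat) \<Rightarrow> complex mat" where
  "blockdiag d m B = mat (d*m) (d*m)
     (\<lambda>(k,l). if k div d = l div d then B (k div d) $$ (k mod d, l mod d) else 0)"

definition blk :: "nat \<Rightarrow> complex mat \<Rightarrow> nat \<Rightarrow> nat \<Rightarrow> complex mat" where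
  "blk d C i j = mat d d (\<lambda>(k,l). C $$ (i*d + k, j*d + l))"

definition ptrace :: "nat \<Rightarrow> nat \<Rightarrow> complex mat \<Rightarrow> complex mat" where
  "ptrace d m C = msum d d (\<lambda>i. blk d C i i) m"

end

theory Submission
  imports Defs "Jordan_Normal_Form.Spectral_Radius"
begin

text \<open>
  Part (1): diagonalise \<open>A = W \<Lambda> W\<^sup>*\<close> and conjugate further by the block Fourier matrix
  \<open>F = F\<^sub>m \<otimes> I\<^sub>d\<close>. Every diagonal block of \<open>F\<^sup>* \<Lambda> F\<close> equals \<open>D/m\<close>, where \<open>D\<close> is the diagonal matrix
  whose \<open>r\<close>-th entry is the sum of the eigenvalues \<open>\<lambda>\<^bsub>ad+r\<^esub>\<close>, \<open>a < m\<close>; so \<open>U = W F\<close> works.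

  Part (2): put \<open>M = \<surd>m A\<^bsup>1/2\<^esup> U\<close>, so that \<open>M M\<^sup>* = m A\<close> and \<open>M\<^sup>* M = m U\<^sup>* A U\<close>. For the
  block projections \<open>P\<^sub>i\<close> we get \<open>\<Sum>\<^sub>i (M P\<^sub>i)(M P\<^sub>i)\<^sup>* = M (\<Sum>\<^sub>i P\<^sub>i) M\<^sup>* = m A\<close>, while
  \<open>(M P\<^sub>i)\<^sup>*(M P\<^sub>i) = m P\<^sub>i U\<^sup>* A U P\<^sub>i\<close> is, by the hypothesis on the pinching, the block diagonal
  matrix with \<open>D\<close> in the \<open>i\<close>-th block. \<open>X\<^sub>i\<close> consists of the \<open>d\<close> columns of \<open>M P\<^sub>i\<close> that can be
  nonzero, and \<open>U\<^sub>i\<close> comes from the unitary similarity of \<open>Z Z\<^sup>*\<close> and \<open>Z\<^sup>* Z\<close> for \<open>Z = M P\<^sub>i\<close>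
  (polar decomposition).
\<close>

lemma cadj_carrier [simp]: "cadj A \<in> carrier_mat (dim_col A) (dim_row A)"
  unfolding cadj_def by auto

lemma cadj_carrier_mat: "A \<in> carrier_mat r c \<Longrightarrow> cadj A \<in> carrier_mat c r"
  unfolding cadj_def carrier_mat_def by auto

lemma dim_cadj [simp]: "dim_row (cadj A) = dim_col A" "dim_col (cadj A) = dim_row A"
  unfolding cadj_def by auto

lemma index_cadj [simp]:
  "i < dim_col A \<Longrightarrow> j < dim_row A \<Longrightarrow> cadj A $$ (i,j) = cnj (A $$ (j,i))"
  unfolding cadj_def by auto

lemma index_mult_mat_sum:
  "i < dim_row A \<Longrightarrow> j < dim_col B \<Longrightarrow> dim_col A = dim_row B \<Longrightarrow>
    (A * B) $$ (i,j) = (\<Sum>k<dim_col A. A $$ (i,k) * B $$ (k,j))"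
  by (auto simp: scalar_prod_def lessThan_atLeast0 intro!: sum.cong)

declare index_mult_mat(1) [simp del]

lemma eq_carrier_matI:
  "A \<in> carrier_mat r c \<Longrightarrow> B \<in> carrier_mat r c \<Longrightarrow>
    (\<And>i j. i < r \<Longrightarrow> j < c \<Longrightarrow> A $$ (i,j) = B $$ (i,j)) \<Longrightarrow> A = B"
  by (rule eq_matI) auto

lemma cadj_mult:
  assumes A: "A \<in> carrier_mat r p" and B: "B \<in> carrier_mat p c"
  shows "cadj (A * B) = cadj B * cadj A"
proof (rule eq_carrier_matI[of _ c r])
  fix i j assume ij: "i < c" "j < r"
  have "cadj (A * B) $$ (i,j) = cnj (\<Sum>k<p. A $$ (j,k) * B $$ (k,i))"
    using A B ij by (simp add: index_mult_mat_sum)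
  also have "\<dots> = (\<Sum>k<p. cnj (B $$ (k,i)) * cnj (A $$ (j,k)))"
    by (simp add: mult.commute)
  also have "\<dots> = (cadj B * cadj A) $$ (i,j)"
    using A B ij by (simp add: index_mult_mat_sum)
  finally show "cadj (A * B) $$ (i,j) = (cadj B * cadj A) $$ (i,j)" .
qed (use A B in \<open>auto intro: cadj_carrier_mat\<close>)

lemma cadj_cadj [simp]: "cadj (cadj A) = A"
  by (rule eq_matI) auto

lemmas mult_carrier_sq = mult_carrier_mat[of _ n n _ n] for n
lemmas assoc_mult_sq = assoc_mult_mat[of _ n n _ n _ n] for n
lemmas cadj_mult_sq = cadj_mult[of _ n n _ n] for n

lemma cnj_mult_self: "cnj z * z = complex_of_real ((cmod z)\<^sup>2)"
  using complex_norm_square[of z] by (simp add: mult.commute)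

lemma unitary_matI_left:
  assumes U: "U \<in> carrier_mat n n" and L: "cadj U * U = 1\<^sub>m n"
  shows "unitary_mat n U"
  using U L mat_mult_left_right_inverse[OF cadj_carrier_mat[OF U] U L]
  unfolding unitary_mat_def by blast

lemma unitary_matD:
  assumes "unitary_mat n U"
  shows "U \<in> carrier_mat n n" "cadj U \<in> carrier_mat n n" "cadj U * U = 1\<^sub>m n" "U * cadj U = 1\<^sub>m n"
  using assms unfolding unitary_mat_def by (auto intro: cadj_carrier_mat)

lemma unitary_cadj_mult_cancel:
  "unitary_mat n U \<Longrightarrow> Y \<in> carrier_mat n n \<Longrightarrow> cadj U * (U * Y) = Y"
  unfolding unitary_mat_def
  by (metis assoc_mult_mat cadj_carrier_mat left_mult_one_mat)

lemma unitary_mult_cadj_cancel: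
  "unitary_mat n U \<Longrightarrow> Y \<in> carrier_mat n n \<Longrightarrow> U * (cadj U * Y) = Y"
  unfolding unitary_mat_def
  by (metis assoc_mult_mat cadj_carrier_mat left_mult_one_mat)

lemma unitary_mat_cadj: "unitary_mat n U \<Longrightarrow> unitary_mat n (cadj U)"
  unfolding unitary_mat_def by (auto intro: cadj_carrier_mat)

lemma unitary_mat_mult:
  assumes U: "unitary_mat n U" and V: "unitary_mat n V"
  shows "unitary_mat n (U * V)"
proof (rule unitary_matI_left)
  note u = unitary_matD[OF U] and v = unitary_matD[OF V]
  show "U * V \<in> carrier_mat n n" using u v by (simp add: mult_carrier_sq)
  show "cadj (U * V) * (U * V) = 1\<^sub>m n"
    using u v by (simp add: cadj_mult_sq assoc_mult_sq mult_carrier_sq unitary_cadj_mult_cancel[OF U])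
qed

lemma unitary_conj_conj:
  assumes U: "unitary_mat n U" and V: "unitary_mat n V" and M: "M \<in> carrier_mat n n"
  shows "cadj (U * V) * M * (U * V) = cadj V * (cadj U * M * U) * V"
  using unitary_matD[OF U] unitary_matD[OF V] M
  by (simp add: cadj_mult_sq assoc_mult_sq mult_carrier_sq)

subsection \<open>Orthonormal families\<close>

definition orthonormal :: "nat \<Rightarrow> (nat \<Rightarrow> nat \<Rightarrow> complex) \<Rightarrow> nat set \<Rightarrow> bool" where
  "orthonormal n g K \<longleftrightarrow>
     (\<forall>j\<in>K. \<forall>k\<in>K. (\<Sum>l<n. cnj (g j l) * g k l) = (if j = k then 1 else 0))"

lemma orthonormalD:
  "orthonormal n g K \<Longrightarrow> j \<in> K \<Longrightarrow> k \<in> K \<Longrightarrow>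
    (\<Sum>l<n. cnj (g j l) * g k l) = (if j = k then 1 else 0)"
  unfolding orthonormal_def by blast

lemma orthonormal_unitary:
  assumes "orthonormal n g {..<n}"
  shows "unitary_mat n (mat n n (\<lambda>(l,k). g k l))"
proof (rule unitary_matI_left)
  let ?Q = "mat n n (\<lambda>(l,k). g k l)"
  show Q: "?Q \<in> carrier_mat n n" by simp
  show "cadj ?Q * ?Q = 1\<^sub>m n"
  proof (rule eq_carrier_matI[of _ n n])
    fix i j assume ij: "i < n" "j < n"
    have "(cadj ?Q * ?Q) $$ (i,j) = (\<Sum>l<n. cnj (g i l) * g j l)"
      using ij by (simp add: index_mult_mat_sum)
    also have "\<dots> = 1\<^sub>m n $$ (i,j)" using assms ij unfolding orthonormal_def by simp
    finally show "(cadj ?Q * ?Q) $$ (i,j) = 1\<^sub>m n $$ (i,j)" .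
  qed (use Q in \<open>auto intro: mult_carrier_mat cadj_carrier_mat\<close>)
qed

lemma orthonormal_rows:
  assumes "orthonormal n g {..<n}" and "i < n" and "l < n"
  shows "(\<Sum>c<n. g c i * cnj (g c l)) = (if i = l then 1 else 0)"
proof -
  let ?Q = "mat n n (\<lambda>(l,k). g k l)"
  have "?Q * cadj ?Q = 1\<^sub>m n" using unitary_matD(4)[OF orthonormal_unitary[OF assms(1)]] .
  then have "(?Q * cadj ?Q) $$ (i,l) = 1\<^sub>m n $$ (i,l)" by simp
  then show ?thesis using assms(2,3) by (simp add: index_mult_mat_sum)
qed

lemma orthonormal_expansion:
  assumes o: "orthonormal n g {..<n}" and i: "i < n"
  shows "(\<Sum>c<n. (\<Sum>l<n. cnj (g c l) * v l) * g c i) = v i"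
proof -
  have "(\<Sum>c<n. (\<Sum>l<n. cnj (g c l) * v l) * g c i) = (\<Sum>c<n. \<Sum>l<n. v l * (g c i * cnj (g c l)))"
    by (simp add: sum_distrib_left sum_distrib_right mult_ac)
  also have "\<dots> = (\<Sum>l<n. v l * (\<Sum>c<n. g c i * cnj (g c l)))"
    by (subst sum.swap) (simp add: sum_distrib_left)
  also have "\<dots> = (\<Sum>l<n. v l * (if i = l then 1 else 0))"
    using o i by (intro sum.cong refl) (simp add: orthonormal_rows)
  also have "\<dots> = v i" using i by (simp add: if_distrib cong: if_cong)
  finally show ?thesis .
qed

lemma orthonormal_coeff:
  assumes o: "orthonormal n g {..<n}" and c: "c < n" and N: "k + N \<le> n"
  shows "(\<Sum>l<n. cnj (g c l) * (\<Sum>a<N. y a * g (k+a) l)) = (\<Sum>a<N. y a * (if c = k+a then 1 else 0))"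
proof -
  have "(\<Sum>l<n. cnj (g c l) * (\<Sum>a<N. y a * g (k+a) l))
      = (\<Sum>l<n. \<Sum>a<N. y a * (cnj (g c l) * g (k+a) l))"
    by (simp add: sum_distrib_left mult_ac)
  also have "\<dots> = (\<Sum>a<N. y a * (\<Sum>l<n. cnj (g c l) * g (k+a) l))"
    by (subst sum.swap) (simp add: sum_distrib_left)
  also have "\<dots> = (\<Sum>a<N. y a * (if c = k+a then 1 else 0))"
    using o c N unfolding orthonormal_def by (intro sum.cong refl) auto
  finally show ?thesis .
qed

lemma exists_normalizing_scalar:
  fixes x :: "nat \<Rightarrow> complex"
  assumes "l0 < n" "x l0 \<noteq> 0"
  shows "\<exists>c::complex. (\<Sum>l<n. cnj (c * x l) * (c * x l)) = 1"
proof -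
  define r where "r = (\<Sum>l<n. (cmod (x l))\<^sup>2)"
  have "0 < (cmod (x l0))\<^sup>2" using assms by simp
  also have "\<dots> \<le> r" unfolding r_def using assms by (intro member_le_sum) simp_all
  finally have r: "r > 0" .
  define c where "c = complex_of_real (1 / sqrt r)"
  have cc: "cnj c * c = complex_of_real (1 / r)"
    unfolding c_def using r by (simp flip: of_real_mult)
  have "(\<Sum>l<n. cnj (c * x l) * (c * x l)) = (\<Sum>l<n. (cnj c * c) * (cnj (x l) * x l))"
    by (simp add: mult_ac)
  also have "\<dots> = complex_of_real (1 / r) * complex_of_real r"
    unfolding cc r_def by (simp add: cnj_mult_self sum_distrib_left)
  finally show ?thesis using r by auto
qed

lemma orthonormal_exists_orthogonal_unit:
  assumes K: "K \<subseteq> {..<n}" and cK: "card K < n" and o: "orthonormal n g K"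
  shows "\<exists>h. (\<Sum>l<n. cnj (h l) * h l) = 1 \<and> (\<forall>k\<in>K. (\<Sum>l<n. cnj (g k l) * h l) = 0)"
proof -
  have fK: "finite K" using K finite_subset by blast
  note og = orthonormalD[OF o]
  \<comment> \<open>\<open>s l\<^sub>0\<close> is the \<open>l\<^sub>0\<close>-th coordinate of the projection \<open>p\<close> of \<open>e\<^bsub>l\<^sub>0\<^esub>\<close> onto the orthogonal
    complement of \<open>g ` K\<close>; the \<open>s l\<^sub>0\<close> sum to \<open>n - card K > 0\<close>\<close>
  define s where "s l0 = 1 - (\<Sum>k\<in>K. cnj (g k l0) * g k l0)" for l0
  have "(\<Sum>l0<n. s l0) = of_nat n - (\<Sum>k\<in>K. \<Sum>l0<n. cnj (g k l0) * g k l0)"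
    unfolding s_def by (simp add: sum_subtractf sum.swap[of _ K])
  also have "(\<Sum>k\<in>K. \<Sum>l0<n. cnj (g k l0) * g k l0) = of_nat (card K)"
    by (simp add: og)
  finally have "(\<Sum>l0<n. s l0) \<noteq> 0" using cK by simp
  then obtain l0 where l0: "l0 < n" "s l0 \<noteq> 0"
    by (metis (no_types, lifting) lessThan_iff sum.neutral)
  define p where "p l = (if l = l0 then 1 else 0) - (\<Sum>k\<in>K. cnj (g k l0) * g k l)" for l
  have "p l0 \<noteq> 0" using l0 unfolding p_def s_def by simp
  then obtain c where c: "(\<Sum>l<n. cnj (c * p l) * (c * p l)) = 1"
    using exists_normalizing_scalar[OF l0(1)] by blast
  have "(\<Sum>l<n. cnj (g j l) * (c * p l)) = 0" if j: "j \<in> K" for j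
  proof -
    have "(\<Sum>l<n. cnj (g j l) * p l) = (\<Sum>l<n. cnj (g j l) * (if l = l0 then 1 else 0))
        - (\<Sum>k\<in>K. cnj (g k l0) * (\<Sum>l<n. cnj (g j l) * g k l))"
      unfolding p_def
      by (simp add: right_diff_distrib sum_subtractf sum_distrib_left sum.swap[of _ K] mult_ac)
    also have "\<dots> = cnj (g j l0) - (\<Sum>k\<in>K. cnj (g k l0) * (if j = k then 1 else 0))"
      using j l0 by (simp add: og if_distrib cong: if_cong)
    also have "\<dots> = 0" using fK j by (simp add: if_distrib cong: if_cong)
    finally show ?thesis by (simp add: sum_distrib_left[symmetric] mult.left_commute)
  qed
  with c show ?thesis by (intro exI[of _ "\<lambda>l. c * p l"]) blast
qed

lemma orthonormal_insert:
  assumes o: "orthonormal n g K" and j: "j \<notin> K"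
    and h1: "(\<Sum>l<n. cnj (h l) * h l) = 1" and h2: "\<forall>k\<in>K. (\<Sum>l<n. cnj (g k l) * h l) = 0"
  shows "orthonormal n (g(j := h)) (insert j K)"
proof -
  have "(\<Sum>l<n. cnj (h l) * g k l) = 0" if "k \<in> K" for k
  proof -
    have "(\<Sum>l<n. cnj (h l) * g k l) = cnj (\<Sum>l<n. cnj (g k l) * h l)"
      by (simp add: mult.commute)
    with h2 that show ?thesis by simp
  qed
  with o j h1 h2 show ?thesis unfolding orthonormal_def by auto
qed

lemma orthonormal_extend:
  assumes "K \<subseteq> {..<n}" "orthonormal n g K"
  shows "\<exists>g'. orthonormal n g' {..<n} \<and> (\<forall>k\<in>K. g' k = g k)"
  using assms
proof (induction "n - card K" arbitrary: K g rule: less_induct)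
  case less
  have fK: "finite K" using less.prems finite_subset by blast
  show ?case
  proof (cases "card K < n")
    case False
    then have "K = {..<n}"
      using card_subset_eq[OF _ less.prems(1)] card_mono[OF _ less.prems(1)] by simp
    then show ?thesis using less.prems by blast
  next
    case cK: True
    obtain h where h: "(\<Sum>l<n. cnj (h l) * h l) = 1" "\<forall>k\<in>K. (\<Sum>l<n. cnj (g k l) * h l) = 0"
      using orthonormal_exists_orthogonal_unit[OF less.prems(1) cK less.prems(2)] by blast
    obtain j where j: "j < n" "j \<notin> K"
      using cK card_mono[OF fK, of "{..<n}"] by force
    have "n - card (insert j K) < n - card K" using j fK cK by simp
    from less.hyps[OF this _ orthonormal_insert[OF less.prems(2) j(2) h]]
    obtain g' where "orthonormal n g' {..<n}" "\<forall>k\<in>insert j K. g' k = (g(j := h)) k"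
      using j less.prems(1) by auto
    then show ?thesis using j(2) by auto
  qed
qed

subsection \<open>Spectral theorem for positive semidefinite matrices\<close>

lemma sum_lessThan_split:
  fixes f :: "nat \<Rightarrow> 'a::comm_monoid_add"
  assumes "k \<le> n"
  shows "(\<Sum>c<n. f c) = (\<Sum>c<k. f c) + (\<Sum>a<n-k. f (k+a))"
proof -
  have "(\<Sum>c<n. f c) = sum f {0..<k} + sum f {k..<n}"
    using assms by (simp add: lessThan_atLeast0 sum.atLeastLessThan_concat)
  also have "sum f {k..<n} = (\<Sum>a<n-k. f (k+a))"
    using assms by (simp add: sum.shift_bounds_nat_ivl[of f 0 k "n-k", symmetric] lessThan_atLeast0 add.commute)
  finally show ?thesis by (simp add: lessThan_atLeast0)
qed

lemma dim_mat_diag [simp]: "dim_row (mat_diag n f) = n" "dim_col (mat_diag n f) = n"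
  unfolding mat_diag_def by simp_all

lemma index_mat_diag [simp]: "i < n \<Longrightarrow> j < n \<Longrightarrow> mat_diag n f $$ (i,j) = (if i = j then f j else 0)"
  unfolding mat_diag_def by simp

lemma index_mult_mat_diag_cadj:
  assumes W: "W \<in> carrier_mat n n" and i: "i < n" and j: "j < n"
  shows "(W * mat_diag n f * cadj W) $$ (i,j) = (\<Sum>k<n. W$$(i,k) * f k * cnj (W$$(j,k)))"
  using W i j by (simp add: mat_diag_mult_right[OF W] index_mult_mat_sum)

lemma hermitian_inner_eigvec:
  assumes A: "A \<in> carrier_mat n n" and H: "cadj A = A"
    and u: "\<And>i. i < n \<Longrightarrow> (\<Sum>l<n. A$$(i,l) * u l) = \<mu> * u i"
  shows "(\<Sum>l<n. cnj (u l) * (\<Sum>l'<n. A$$(l,l') * v l')) = cnj \<mu> * (\<Sum>l<n. cnj (u l) * v l)"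
proof -
  have Ah: "cnj (A$$(l',l)) = A$$(l,l')" if "l < n" "l' < n" for l l'
  proof -
    have "cadj A $$ (l,l') = cnj (A$$(l',l))" using A that by simp
    then show ?thesis using H by simp
  qed
  have "(\<Sum>l<n. cnj (u l) * (\<Sum>l'<n. A$$(l,l') * v l')) = (\<Sum>l'<n. \<Sum>l<n. cnj (u l) * A$$(l,l') * v l')"
    by (subst sum.swap) (simp add: sum_distrib_left mult_ac)
  also have "\<dots> = (\<Sum>l'<n. cnj (\<Sum>l<n. A$$(l',l) * u l) * v l')"
    by (intro sum.cong refl) (simp add: Ah sum_distrib_left sum_distrib_right mult_ac)
  also have "\<dots> = (\<Sum>l'<n. cnj (\<mu> * u l') * v l')"
    by (intro sum.cong refl) (metis lessThan_iff u)
  also have "\<dots> = cnj \<mu> * (\<Sum>l<n. cnj (u l) * v l)"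
    by (simp add: sum_distrib_left mult_ac)
  finally show ?thesis .
qed

lemma hermitian_compression:
  assumes A: "A \<in> carrier_mat n n" "cadj A = A"
    and g: "orthonormal n g {..<n}" and k: "k \<le> n"
    and eig: "\<And>j i. j < k \<Longrightarrow> i < n \<Longrightarrow> (\<Sum>l<n. A$$(i,l) * g j l) = lam j * g j i"
    and b: "k + b < n" and i: "i < n"
  shows "(\<Sum>l<n. A$$(i,l) * g (k+b) l)
       = (\<Sum>a<n-k. (\<Sum>l<n. cnj (g (k+a) l) * (\<Sum>l'<n. A$$(l,l') * g (k+b) l')) * g (k+a) i)"
    (is "?v i = ?rhs")
proof -
  have "?v i = (\<Sum>c<n. (\<Sum>l<n. cnj (g c l) * ?v l) * g c i)"
    using orthonormal_expansion[OF g i] by simp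
  also have "\<dots> = (\<Sum>c<k. (\<Sum>l<n. cnj (g c l) * ?v l) * g c i) + ?rhs"
    by (rule sum_lessThan_split[OF k])
  also have "(\<Sum>c<k. (\<Sum>l<n. cnj (g c l) * ?v l) * g c i) = 0"
  proof (intro sum.neutral ballI)
    fix c assume "c \<in> {..<k}"
    then have c: "c < k" by simp
    have "(\<Sum>l<n. cnj (g c l) * ?v l) = cnj (lam c) * (\<Sum>l<n. cnj (g c l) * g (k+b) l)"
      using hermitian_inner_eigvec[OF A eig[OF c]] by blast
    also have "\<dots> = 0" using orthonormalD[OF g, of c "k+b"] c b by simp
    finally show "(\<Sum>l<n. cnj (g c l) * ?v l) * g c i = 0" by simp
  qed
  finally show ?thesis by simp
qed

lemma hermitian_compression_eigvec:
  assumes A: "A \<in> carrier_mat n n" "cadj A = A"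
    and g: "orthonormal n g {..<n}" and k: "k \<le> n"
    and eig: "\<And>j i. j < k \<Longrightarrow> i < n \<Longrightarrow> (\<Sum>l<n. A$$(i,l) * g j l) = lam j * g j i"
    and y: "\<And>a. a < n - k \<Longrightarrow>
      (\<Sum>b<n-k. (\<Sum>l<n. cnj (g (k+a) l) * (\<Sum>l'<n. A$$(l,l') * g (k+b) l')) * y b) = \<mu> * y a"
    and i: "i < n"
  shows "(\<Sum>l<n. A$$(i,l) * (\<Sum>a<n-k. y a * g (k+a) l)) = \<mu> * (\<Sum>a<n-k. y a * g (k+a) i)"
proof -
  let ?B = "\<lambda>a b. \<Sum>l<n. cnj (g (k+a) l) * (\<Sum>l'<n. A$$(l,l') * g (k+b) l')"
  have comp: "(\<Sum>l<n. A$$(i,l) * g (k+b) l) = (\<Sum>a<n-k. ?B a b * g (k+a) i)" if "b < n - k" for b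
    using hermitian_compression[where k=k, OF A g k eig _ i] k that by simp
  have "(\<Sum>l<n. A$$(i,l) * (\<Sum>a<n-k. y a * g (k+a) l))
      = (\<Sum>l<n. \<Sum>b<n-k. y b * (A$$(i,l) * g (k+b) l))"
    by (simp add: sum_distrib_left mult.left_commute)
  also have "\<dots> = (\<Sum>b<n-k. y b * (\<Sum>a<n-k. ?B a b * g (k+a) i))"
    by (subst sum.swap) (simp add: sum_distrib_left[symmetric] comp)
  also have "\<dots> = (\<Sum>a<n-k. g (k+a) i * (\<Sum>b<n-k. ?B a b * y b))"
    unfolding sum_distrib_left by (subst sum.swap) (simp add: mult_ac)
  also have "\<dots> = (\<Sum>a<n-k. g (k+a) i * (\<mu> * y a))"
    by (intro sum.cong refl) (simp add: y)
  also have "\<dots> = \<mu> * (\<Sum>a<n-k. y a * g (k+a) i)"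
    by (simp add: sum_distrib_left mult_ac)
  finally show ?thesis .
qed

lemma exists_nonzero_index:
  assumes "y \<in> carrier_vec N" "y \<noteq> 0\<^sub>v N"
  shows "\<exists>a<N. y $ a \<noteq> 0"
proof (rule ccontr)
  assume "\<not> ?thesis"
  then have "y = 0\<^sub>v N" using assms(1) by (intro eq_vecI) auto
  with assms(2) show False ..
qed

lemma exists_unit_eigvec_orthogonal:
  assumes l0: "l0 < n" "x l0 \<noteq> 0"
    and orth: "\<forall>j<k. (\<Sum>l<n. cnj (g j l) * x l) = 0"
    and eig: "\<forall>i<n. (\<Sum>l<n. A$$(i,l) * x l) = \<mu> * x i"
  shows "\<exists>h. (\<Sum>l<n. cnj (h l) * h l) = 1 \<and> (\<forall>j<k. (\<Sum>l<n. cnj (g j l) * h l) = 0)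
            \<and> (\<forall>i<n. (\<Sum>l<n. A$$(i,l) * h l) = \<mu> * h i)"
proof -
  obtain c where c: "(\<Sum>l<n. cnj (c * x l) * (c * x l)) = 1"
    using exists_normalizing_scalar[of l0 n x, OF l0] by blast
  have scale: "(\<Sum>l<n. f l * (c * x l)) = c * (\<Sum>l<n. f l * x l)" for f
    by (simp add: sum_distrib_left mult_ac)
  show ?thesis
    using c orth eig by (intro exI[of _ "\<lambda>l. c * x l"]) (simp add: scale)
qed

lemma hermitian_exists_orthogonal_eigvec:
  assumes A: "A \<in> carrier_mat n n" "cadj A = A"
    and g: "orthonormal n g {..<k}" and k: "k < n"
    and eig: "\<And>j i. j < k \<Longrightarrow> i < n \<Longrightarrow> (\<Sum>l<n. A$$(i,l) * g j l) = lam j * g j i"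
  shows "\<exists>h \<mu>. (\<Sum>l<n. cnj (h l) * h l) = 1 \<and> (\<forall>j<k. (\<Sum>l<n. cnj (g j l) * h l) = 0)
            \<and> (\<forall>i<n. (\<Sum>l<n. A$$(i,l) * h l) = \<mu> * h i)"
proof -
  obtain g' where g': "orthonormal n g' {..<n}" and gg: "\<forall>j\<in>{..<k}. g' j = g j"
    using orthonormal_extend[of "{..<k}" n g] g k by auto
  have eig': "(\<Sum>l<n. A$$(i,l) * g' j l) = lam j * g' j i" if "j < k" "i < n" for j i
    using eig[OF that] gg that by simp
  define N where "N = n - k"
  \<comment> \<open>the compression of \<open>A\<close> to the orthogonal complement of \<open>g ` {..<k}\<close>, in the basis \<open>g'\<close>\<close>
  define B where "B = mat N N (\<lambda>(a,b). \<Sum>l<n. cnj (g' (k+a) l) * (\<Sum>l'<n. A$$(l,l') * g' (k+b) l'))"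
  have B: "B \<in> carrier_mat N N" unfolding B_def by simp
  obtain \<mu> where "\<mu> \<in> spectrum B" using spectrum_non_empty[OF B] k unfolding N_def by auto
  then obtain y where y: "y \<in> carrier_vec N" "y \<noteq> 0\<^sub>v N" "B *\<^sub>v y = \<mu> \<cdot>\<^sub>v y"
    unfolding spectrum_def eigenvalue_def eigenvector_def using B by auto
  have By: "(\<Sum>b<N. B$$(a,b) * y$b) = \<mu> * y$a" if "a < N" for a
    using arg_cong[OF y(3), of "\<lambda>v. v $ a"] y(1) B that
    by (simp add: scalar_prod_def lessThan_atLeast0)
  obtain a0 where a0: "a0 < N" "y $ a0 \<noteq> 0" using exists_nonzero_index[OF y(1,2)] by blast
  define x where "x l = (\<Sum>a<N. y$a * g' (k+a) l)" for l
  have coeff: "(\<Sum>l<n. cnj (g' c l) * x l) = (\<Sum>a<N. y$a * (if c = k+a then 1 else 0))" if "c < n" for c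
    unfolding x_def using orthonormal_coeff[OF g' that] k unfolding N_def by simp
  have "(\<Sum>l<n. cnj (g' (k+a0) l) * x l) = y $ a0"
    using coeff[of "k+a0"] a0 unfolding N_def by (simp add: if_distrib cong: if_cong)
  with a0(2) obtain l0 where l0: "l0 < n" "x l0 \<noteq> 0"
    by (metis (mono_tags) lessThan_iff mult_zero_right sum.neutral)
  have orth: "\<forall>j<k. (\<Sum>l<n. cnj (g j l) * x l) = 0"
  proof (intro allI impI)
    fix j assume "j < k"
    then show "(\<Sum>l<n. cnj (g j l) * x l) = 0" using coeff[of j] gg k by simp
  qed
  have y': "(\<Sum>b<N. (\<Sum>l<n. cnj (g' (k+a) l) * (\<Sum>l'<n. A$$(l,l') * g' (k+b) l')) * y$b) = \<mu> * y$a"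
    if "a < N" for a
    using By[OF that] that unfolding B_def by simp
  have "\<forall>i<n. (\<Sum>l<n. A$$(i,l) * x l) = \<mu> * x i"
    using y' hermitian_compression_eigvec[where k=k and y="\<lambda>b. y $ b" and \<mu>=\<mu>, OF A g' _ eig'] k
    unfolding x_def N_def by simp
  with exists_unit_eigvec_orthogonal[OF l0 orth] show ?thesis by blast
qed

lemma hermitian_orthonormal_eigenbasis:
  assumes A: "A \<in> carrier_mat n n" "cadj A = A"
  shows "\<exists>g lam. orthonormal n g {..<n} \<and> (\<forall>j<n. \<forall>i<n. (\<Sum>l<n. A$$(i,l) * g j l) = lam j * g j i)"
proof -
  have "k \<le> n \<Longrightarrow> \<exists>g lam. orthonormal n g {..<k} \<and> (\<forall>j<k. \<forall>i<n. (\<Sum>l<n. A$$(i,l) * g j l) = lam j * g j i)"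
    for k
  proof (induction k)
    case 0
    show ?case by (simp add: orthonormal_def)
  next
    case (Suc k)
    then obtain g lam where g: "orthonormal n g {..<k}"
      and eig: "\<forall>j<k. \<forall>i<n. (\<Sum>l<n. A$$(i,l) * g j l) = lam j * g j i" by auto
    have k: "k < n" using Suc.prems by simp
    have eig_k: "(\<Sum>l<n. A$$(i,l) * g j l) = lam j * g j i" if "j < k" "i < n" for j i
      using eig that by blast
    obtain h \<mu> where h: "(\<Sum>l<n. cnj (h l) * h l) = 1" "\<forall>j<k. (\<Sum>l<n. cnj (g j l) * h l) = 0"
      and eig_h: "\<forall>i<n. (\<Sum>l<n. A$$(i,l) * h l) = \<mu> * h i"
      using hermitian_exists_orthogonal_eigvec[OF A g k eig_k] by blast
    have "orthonormal n (g(k := h)) {..<Suc k}"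
      using orthonormal_insert[OF g _ h(1)] h(2) by (simp add: lessThan_Suc)
    moreover have "\<forall>j<Suc k. \<forall>i<n. (\<Sum>l<n. A$$(i,l) * (g(k := h)) j l) = (lam(k := \<mu>)) j * (g(k := h)) j i"
    proof (intro allI impI)
      fix j i assume "j < Suc k" "i < n"
      then show "(\<Sum>l<n. A$$(i,l) * (g(k := h)) j l) = (lam(k := \<mu>)) j * (g(k := h)) j i"
        using eig_k eig_h by (cases "j = k") simp_all
    qed
    ultimately show ?case by blast
  qed
  then show ?thesis by blast
qed

lemma psd_eigenvalue_nonneg:
  assumes P: "psd_mat n A" and u: "(\<Sum>l<n. cnj (u l) * u l) = 1"
    and eig: "\<forall>i<n. (\<Sum>l<n. A$$(i,l) * u l) = \<mu> * u i"
  shows "\<mu> = complex_of_real (Re \<mu>)" "Re \<mu> \<ge> 0"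
proof -
  have A: "A \<in> carrier_mat n n" using P unfolding psd_mat_def by blast
  have "conjugate (vec n u) \<bullet> (A *\<^sub>v vec n u) = (\<Sum>i<n. cnj (u i) * (\<Sum>l<n. A$$(i,l) * u l))"
    using A by (simp add: scalar_prod_def lessThan_atLeast0)
  also have "\<dots> = (\<Sum>i<n. \<mu> * (cnj (u i) * u i))"
    using eig by (intro sum.cong refl) simp
  also have "\<dots> = \<mu>" using u by (simp flip: sum_distrib_left)
  finally have "conjugate (vec n u) \<bullet> (A *\<^sub>v vec n u) = \<mu>" .
  moreover have "\<forall>v \<in> carrier_vec n. Im (conjugate v \<bullet> (A *\<^sub>v v)) = 0 \<and> Re (conjugate v \<bullet> (A *\<^sub>v v)) \<ge> 0"
    using P unfolding psd_mat_def by blast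
  ultimately have "Im \<mu> = 0 \<and> Re \<mu> \<ge> 0"
    by (metis vec_carrier)
  then show "\<mu> = complex_of_real (Re \<mu>)" "Re \<mu> \<ge> 0" by (simp_all add: complex_eq_iff)
qed

lemma psd_spectral_decomposition:
  assumes P: "psd_mat n A"
  shows "\<exists>W lam. unitary_mat n W \<and> (\<forall>k<n. lam k \<ge> (0::real)) \<and>
           A = W * mat_diag n (\<lambda>k. complex_of_real (lam k)) * cadj W"
proof -
  have A: "A \<in> carrier_mat n n" and H: "cadj A = A" using P unfolding psd_mat_def by auto
  obtain g \<mu> where g: "orthonormal n g {..<n}"
    and eig: "\<forall>j<n. \<forall>i<n. (\<Sum>l<n. A$$(i,l) * g j l) = \<mu> j * g j i"
    using hermitian_orthonormal_eigenbasis[OF A H] by blast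
  define lam where "lam k = Re (\<mu> k)" for k
  have \<mu>: "\<mu> k = complex_of_real (lam k)" "lam k \<ge> 0" if "k < n" for k
  proof -
    have "(\<Sum>l<n. cnj (g k l) * g k l) = 1" using orthonormalD[OF g] that by simp
    moreover have "\<forall>i<n. (\<Sum>l<n. A$$(i,l) * g k l) = \<mu> k * g k i" using eig that by blast
    ultimately show "\<mu> k = complex_of_real (lam k)" "lam k \<ge> 0"
      using psd_eigenvalue_nonneg[OF P] unfolding lam_def by blast+
  qed
  define W where "W = mat n n (\<lambda>(l,k). g k l)"
  have W: "W \<in> carrier_mat n n" unfolding W_def by simp
  have "A = W * mat_diag n (\<lambda>k. complex_of_real (lam k)) * cadj W"
  proof (rule eq_carrier_matI[of _ n n])
    fix i j assume i: "i < n" and j: "j < n"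
    have "A$$(i,j) = (\<Sum>c<n. (\<Sum>l<n. cnj (g c l) * A$$(l,j)) * g c i)"
      using orthonormal_expansion[OF g i, of "\<lambda>l. A$$(l,j)"] by simp
    also have "\<dots> = (\<Sum>c<n. (\<Sum>l<n. cnj (g c l) * (\<Sum>l'<n. A$$(l,l') * (if l' = j then 1 else 0))) * g c i)"
      using A j by (simp add: if_distrib cong: if_cong)
    also have "\<dots> = (\<Sum>c<n. g c i * complex_of_real (lam c) * cnj (g c j))"
    proof (intro sum.cong refl)
      fix c assume "c \<in> {..<n}"
      then have c: "c < n" by simp
      have "(\<Sum>l<n. cnj (g c l) * (\<Sum>l'<n. A$$(l,l') * (if l' = j then 1 else 0)))
          = cnj (\<mu> c) * (\<Sum>l<n. cnj (g c l) * (if l = j then 1 else 0))"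
        using eig c by (intro hermitian_inner_eigvec[OF A H]) blast
      also have "\<dots> = complex_of_real (lam c) * cnj (g c j)"
        using j \<mu>[OF c] by (simp add: if_distrib cong: if_cong)
      finally show "(\<Sum>l<n. cnj (g c l) * (\<Sum>l'<n. A$$(l,l') * (if l' = j then 1 else 0))) * g c i
          = g c i * complex_of_real (lam c) * cnj (g c j)" by simp
    qed
    also have "\<dots> = (W * mat_diag n (\<lambda>k. complex_of_real (lam k)) * cadj W) $$ (i,j)"
      unfolding index_mult_mat_diag_cadj[OF W i j] using i j by (simp add: W_def)
    finally show "A$$(i,j) = (W * mat_diag n (\<lambda>k. complex_of_real (lam k)) * cadj W) $$ (i,j)" .
  qed (use A W in \<open>simp_all add: mult_carrier_sq cadj_carrier_mat\<close>)
  moreover have "unitary_mat n W" unfolding W_def by (rule orthonormal_unitary[OF g])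
  ultimately show ?thesis using \<mu>(2) by blast
qed

subsection \<open>Square roots and polar similarity\<close>

lemma cadj_mat_diag_real [simp]:
  "cadj (mat_diag n (\<lambda>k. complex_of_real (r k))) = mat_diag n (\<lambda>k. complex_of_real (r k))"
  by (rule eq_matI) (auto simp: mat_diag_def)

lemma mat_diag_sqrt_square:
  assumes "\<forall>k<n. r k \<ge> 0"
  shows "mat_diag n (\<lambda>k. complex_of_real (sqrt (r k))) * mat_diag n (\<lambda>k. complex_of_real (sqrt (r k)))
       = mat_diag n (\<lambda>k. complex_of_real (r k))"
  unfolding mat_diag_diag using assms by (intro eq_matI) (auto simp: mat_diag_def simp flip: of_real_mult)

lemma psd_gram:
  assumes Y: "Y \<in> carrier_mat n n"
  shows "psd_mat n (cadj Y * Y)"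
  unfolding psd_mat_def
proof (intro conjI ballI)
  show "cadj Y * Y \<in> carrier_mat n n" using Y by (simp add: mult_carrier_sq cadj_carrier_mat)
  show "cadj (cadj Y * Y) = cadj Y * Y" using Y by (simp add: cadj_mult[OF cadj_carrier_mat[OF Y] Y])
  fix v :: "complex vec" assume v: "v \<in> carrier_vec n"
  let ?w = "Y *\<^sub>v v"
  have "cadj Y * Y *\<^sub>v v = cadj Y *\<^sub>v ?w"
    using Y v by (simp add: assoc_mult_mat_vec[of _ n n _ n] cadj_carrier_mat)
  then have "conjugate v \<bullet> (cadj Y * Y *\<^sub>v v) = (\<Sum>j<n. cnj (v$j) * (\<Sum>i<n. cnj (Y$$(i,j)) * ?w $ i))"
    using Y v by (simp add: scalar_prod_def lessThan_atLeast0)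
  also have "\<dots> = (\<Sum>i<n. \<Sum>j<n. cnj (Y$$(i,j) * v$j) * ?w $ i)"
    by (subst sum.swap) (simp add: sum_distrib_left mult_ac)
  also have "\<dots> = (\<Sum>i<n. cnj (?w $ i) * ?w $ i)"
    using Y v by (intro sum.cong refl) (simp add: scalar_prod_def lessThan_atLeast0 sum_distrib_right)
  also have "\<dots> = complex_of_real (\<Sum>i<n. (cmod (?w $ i))\<^sup>2)"
    by (simp add: cnj_mult_self)
  finally have q: "conjugate v \<bullet> (cadj Y * Y *\<^sub>v v) = complex_of_real (\<Sum>i<n. (cmod (?w $ i))\<^sup>2)" .
  show "Im (conjugate v \<bullet> (cadj Y * Y *\<^sub>v v)) = 0" unfolding q by simp
  show "Re (conjugate v \<bullet> (cadj Y * Y *\<^sub>v v)) \<ge> 0" unfolding q by (simp add: sum_nonneg)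
qed

lemma psd_mat_diag:
  assumes "\<forall>k<n. r k \<ge> 0"
  shows "psd_mat n (mat_diag n (\<lambda>k. complex_of_real (r k)))"
  using psd_gram[of "mat_diag n (\<lambda>k. complex_of_real (sqrt (r k)))" n]
  by (simp add: mat_diag_sqrt_square[OF assms] del: mat_diag_diag)

lemma psd_sqrt:
  assumes "psd_mat n A"
  shows "\<exists>R. R \<in> carrier_mat n n \<and> cadj R = R \<and> R * R = A"
proof -
  obtain W lam where W: "unitary_mat n W" and lam: "\<forall>k<n. lam k \<ge> (0::real)"
    and AW: "A = W * mat_diag n (\<lambda>k. complex_of_real (lam k)) * cadj W"
    using psd_spectral_decomposition[OF assms] by blast
  note w = unitary_matD[OF W]
  define S where "S = mat_diag n (\<lambda>k. complex_of_real (sqrt (lam k)))"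
  have S: "S \<in> carrier_mat n n" "cadj S = S" unfolding S_def by simp_all
  have "(W * S * cadj W) * (W * S * cadj W) = W * (S * S) * cadj W"
    using w S by (simp add: assoc_mult_sq mult_carrier_sq unitary_cadj_mult_cancel[OF W])
  also have "\<dots> = A"
    unfolding AW S_def mat_diag_sqrt_square[OF lam] ..
  finally have "(W * S * cadj W) * (W * S * cadj W) = A" .
  moreover have "cadj (W * S * cadj W) = W * S * cadj W"
    using w S by (simp add: cadj_mult_sq assoc_mult_sq mult_carrier_sq)
  moreover have "W * S * cadj W \<in> carrier_mat n n" using w S by (simp add: mult_carrier_sq)
  ultimately show ?thesis by blast
qed

text \<open>The nonzero columns of \<open>Z\<close>, normalised, are completed to an orthonormal basis.\<close>

lemma orthogonal_columns_factor:
  assumes Z: "Z \<in> carrier_mat n n" and lam: "\<forall>k<n. lam k \<ge> 0"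
    and ZZ: "cadj Z * Z = mat_diag n (\<lambda>k. complex_of_real (lam k))"
  shows "\<exists>Q. unitary_mat n Q \<and> Z = Q * mat_diag n (\<lambda>k. complex_of_real (sqrt (lam k)))"
proof -
  have col: "(\<Sum>l<n. cnj (Z$$(l,j)) * Z$$(l,k)) = (if j = k then complex_of_real (lam k) else 0)"
    if "j < n" "k < n" for j k
    using arg_cong[OF ZZ, of "\<lambda>M. M $$ (j,k)"] Z that by (simp add: index_mult_mat_sum)
  define K where "K = {k. k < n \<and> lam k > 0}"
  define g where "g k l = Z$$(l,k) / complex_of_real (sqrt (lam k))" for k l
  have "orthonormal n g K"
    unfolding orthonormal_def
  proof (intro ballI)
    fix j k assume j: "j \<in> K" and k: "k \<in> K"
    have "(\<Sum>l<n. cnj (g j l) * g k l) = (\<Sum>l<n. cnj (Z$$(l,j)) * Z$$(l,k)) /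
        (complex_of_real (sqrt (lam j)) * complex_of_real (sqrt (lam k)))"
      unfolding g_def by (simp add: sum_divide_distrib)
    also have "\<dots> = (if j = k then 1 else 0)"
      using col[of j k] j k unfolding K_def by (simp flip: of_real_mult)
    finally show "(\<Sum>l<n. cnj (g j l) * g k l) = (if j = k then 1 else 0)" .
  qed
  then obtain g' where g': "orthonormal n g' {..<n}" and gg: "\<forall>k\<in>K. g' k = g k"
    using orthonormal_extend[of K n g] unfolding K_def by auto
  define Q where "Q = mat n n (\<lambda>(l,k). g' k l)"
  have Q: "Q \<in> carrier_mat n n" unfolding Q_def by simp
  have "Z = Q * mat_diag n (\<lambda>k. complex_of_real (sqrt (lam k)))"
  proof (rule eq_carrier_matI[of _ n n])
    fix l k assume l: "l < n" and k: "k < n"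
    show "Z $$ (l,k) = (Q * mat_diag n (\<lambda>k. complex_of_real (sqrt (lam k)))) $$ (l,k)"
    proof (cases "k \<in> K")
      case True
      then show ?thesis
        using gg l k unfolding mat_diag_mult_right[OF Q] unfolding Q_def K_def g_def by simp
    next
      case False
      with k lam have "lam k = 0" unfolding K_def by force
      have "complex_of_real (\<Sum>l<n. (cmod (Z$$(l,k)))\<^sup>2) = (\<Sum>l<n. cnj (Z$$(l,k)) * Z$$(l,k))"
        by (simp add: cnj_mult_self)
      also have "\<dots> = 0" using col[OF k k] \<open>lam k = 0\<close> by simp
      finally have "(\<Sum>l<n. (cmod (Z$$(l,k)))\<^sup>2) = 0" by (simp only: of_real_eq_0_iff)
      then have "Z$$(l,k) = 0" using l by (simp add: sum_nonneg_eq_0_iff)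
      then show ?thesis using \<open>lam k = 0\<close> l k Q by (simp add: mat_diag_mult_right[OF Q])
    qed
  qed (use Z Q in simp_all)
  with orthonormal_unitary[OF g'] show ?thesis unfolding Q_def by blast
qed

lemma unitarily_similar_mult_cadj:
  assumes Y: "Y \<in> carrier_mat n n"
  shows "\<exists>V. unitary_mat n V \<and> cadj V * (Y * cadj Y) * V = cadj Y * Y"
proof -
  obtain W lam where W: "unitary_mat n W" and lam: "\<forall>k<n. lam k \<ge> (0::real)"
    and YY: "cadj Y * Y = W * mat_diag n (\<lambda>k. complex_of_real (lam k)) * cadj W"
    using psd_spectral_decomposition[OF psd_gram[OF Y]] by blast
  define L where "L = mat_diag n (\<lambda>k. complex_of_real (lam k))"
  define S where "S = mat_diag n (\<lambda>k. complex_of_real (sqrt (lam k)))"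
  have L: "L \<in> carrier_mat n n" and S: "S \<in> carrier_mat n n" "cadj S = S" "S * S = L"
    unfolding L_def S_def using mat_diag_sqrt_square[OF lam] by simp_all
  note w = unitary_matD[OF W]
  have Y': "cadj Y \<in> carrier_mat n n" using Y by (rule cadj_carrier_mat)
  have "cadj (Y * W) * (Y * W) = cadj W * (cadj Y * Y) * W"
    using Y Y' w by (simp add: cadj_mult_sq assoc_mult_sq mult_carrier_sq)
  also have "\<dots> = L"
    unfolding YY L_def[symmetric] using w L
    by (simp add: assoc_mult_sq mult_carrier_sq unitary_cadj_mult_cancel[OF W])
  finally have "cadj (Y * W) * (Y * W) = L" .
  then obtain Q where Q: "unitary_mat n Q" and YWQ: "Y * W = Q * S"
    using orthogonal_columns_factor[OF mult_carrier_sq[OF Y w(1)] lam] unfolding L_def S_def by blast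
  note q = unitary_matD[OF Q]
  have "Y * cadj Y = (Y * W) * cadj (Y * W)"
    using Y Y' w by (simp add: cadj_mult_sq assoc_mult_sq mult_carrier_sq unitary_mult_cadj_cancel[OF W])
  also have "\<dots> = Q * L * cadj Q"
    unfolding YWQ using q S(1,2) by (simp add: cadj_mult_sq assoc_mult_sq mult_carrier_sq flip: S(3))
  finally have YY': "Y * cadj Y = Q * L * cadj Q" .
  have "cadj (Q * cadj W) * (Y * cadj Y) * (Q * cadj W) = W * L * cadj W"
    unfolding YY' using q w L
    by (simp add: cadj_mult_sq assoc_mult_sq mult_carrier_sq unitary_cadj_mult_cancel[OF Q])
  also have "\<dots> = cadj Y * Y" unfolding YY L_def ..
  finally show ?thesis using unitary_mat_mult[OF Q unitary_mat_cadj[OF W]] by blast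
qed

subsection \<open>Block matrices\<close>

lemma div_less_of_less_mult: "k < d * m \<Longrightarrow> k div d < (m::nat)"
  using less_mult_imp_div_less[of k m d] by (simp add: mult.commute)

lemma block_index_less: "a < m \<Longrightarrow> r < d \<Longrightarrow> a * d + r < d * (m::nat)"
proof -
  assume "a < m" "r < d"
  then have "a * d + r < (a + 1) * d" by simp
  also have "\<dots> \<le> m * d" using \<open>a < m\<close> by (intro mult_le_mono1) simp
  finally show ?thesis by (simp add: mult.commute)
qed

lemma sum_delta_left:
  fixes n :: nat
  shows "(\<Sum>p<n. (if k = p \<and> Q then 1 else 0) * f p) = (if Q \<and> k < n then f k else (0::'a::semiring_1))"
  by (induction n) auto

lemma sum_delta_right:
  fixes n :: nat
  shows "(\<Sum>p<n. f p * (if p = k \<and> Q p then 1 else 0)) = (if Q k \<and> k < n then f k else (0::'a::semiring_1))"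
  by (induction n) auto

lemma sum_delta_two:
  fixes m :: nat
  assumes "i0 < m"
  shows "(\<Sum>i<m. if i0 = i \<and> j0 = i then x else 0) = (if i0 = j0 then x else (0::'a::comm_monoid_add))"
proof -
  have "(\<Sum>i<m. if i0 = i \<and> j0 = i then x else 0) = (if i0 = j0 \<and> i0 < m then x else (0::'a))"
    by (induction m) auto
  with assms show ?thesis by simp
qed

lemma foldr_add_mat:
  assumes "\<forall>i\<in>set xs. f i \<in> carrier_mat r c"
  shows "foldr (\<lambda>i acc. f i + acc) xs (0\<^sub>m r c) \<in> carrier_mat r c \<and>
    (\<forall>k<r. \<forall>l<c. foldr (\<lambda>i acc. f i + acc) xs (0\<^sub>m r c) $$ (k,l) = (\<Sum>i\<leftarrow>xs. f i $$ (k,l)))"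
  using assms by (induction xs) auto

lemma msum_eq:
  assumes "\<forall>i<m. f i \<in> carrier_mat r c"
  shows "msum r c f m = mat r c (\<lambda>(k,l). \<Sum>i<m. f i $$ (k,l))"
proof -
  have "\<forall>i\<in>set [0..<m]. f i \<in> carrier_mat r c" using assms by simp
  from foldr_add_mat[OF this] show ?thesis
    unfolding msum_def by (intro eq_matI) (auto simp: sum_list_distinct_conv_sum_set lessThan_atLeast0)
qed

lemma msum_sandwich:
  assumes M: "M \<in> carrier_mat n n" and N: "N \<in> carrier_mat n n" and Q: "\<forall>i<m. Q i \<in> carrier_mat n n"
  shows "msum n n (\<lambda>i. M * Q i * N) m = M * msum n n Q m * N"
proof -
  have c: "\<forall>i<m. M * Q i * N \<in> carrier_mat n n" using M N Q by (simp add: mult_carrier_sq)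
  have S: "msum n n Q m \<in> carrier_mat n n" unfolding msum_eq[OF Q] by simp
  have triple: "(M * Z * N) $$ (k,l) = (\<Sum>p<n. \<Sum>q<n. M$$(k,p) * (Z$$(p,q) * N$$(q,l)))"
    if Z: "Z \<in> carrier_mat n n" and k: "k < n" and l: "l < n" for Z k l
    using M Z N k l by (simp add: index_mult_mat_sum sum_distrib_left mult_carrier_sq)
  show ?thesis unfolding msum_eq[OF c]
  proof (rule eq_carrier_matI[of _ n n])
    fix k l assume k: "k < n" and l: "l < n"
    have "(\<Sum>i<m. (M * Q i * N) $$ (k,l)) = (\<Sum>i<m. \<Sum>p<n. \<Sum>q<n. M$$(k,p) * (Q i $$(p,q) * N$$(q,l)))"
      using Q k l by (intro sum.cong refl) (simp add: triple)
    also have "\<dots> = (\<Sum>p<n. \<Sum>q<n. \<Sum>i<m. M$$(k,p) * (Q i $$(p,q) * N$$(q,l)))"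
      by (simp add: sum.swap[of _ "{..<m}"])
    also have "\<dots> = (M * msum n n Q m * N) $$ (k,l)"
      unfolding triple[OF S k l] unfolding msum_eq[OF Q]
      by (intro sum.cong refl) (simp add: sum_distrib_left sum_distrib_right)
    finally show "mat n n (\<lambda>(k,l). \<Sum>i<m. (M * Q i * N) $$ (k,l)) $$ (k,l) = (M * msum n n Q m * N) $$ (k,l)"
      using k l by simp
  qed (use M N S in \<open>simp_all add: mult_carrier_sq\<close>)
qed

lemma blockproj_carrier [simp]: "blockproj d m i \<in> carrier_mat (d*m) (d*m)"
  unfolding blockproj_def by simp

lemma dim_blockproj [simp]: "dim_row (blockproj d m i) = d*m" "dim_col (blockproj d m i) = d*m"
  unfolding blockproj_def by simp_all

lemma index_blockproj:
  assumes "k < d*m" "l < d*m"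
  shows "blockproj d m i $$ (k,l) = (if k = l \<and> k div d = i then 1 else 0)"
proof -
  have "d > 0" using assms by (cases "d = 0") simp_all
  then have "(i*d \<le> k \<and> k < (i+1)*d) \<longleftrightarrow> k div d = i"
    by (meson div_less_iff_less_mult le_antisym less_add_one less_eq_div_iff_mult_less_eq less_inc_imp_less_eq)
  then show ?thesis unfolding blockproj_def using assms by simp
qed

lemma cadj_blockproj [simp]: "cadj (blockproj d m i) = blockproj d m i"
  by (rule eq_matI) (auto simp: index_blockproj)

lemma blockproj_idem: "blockproj d m i * blockproj d m i = blockproj d m i"
proof (rule eq_matI)
  fix k l assume "k < dim_row (blockproj d m i)" "l < dim_col (blockproj d m i)"
  then have k: "k < d*m" and l: "l < d*m" by simp_all
  have "(blockproj d m i * blockproj d m i) $$ (k,l)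
     = (\<Sum>p<d*m. (if k = p \<and> k div d = i then 1 else 0) * (if p = l \<and> p div d = i then 1 else 0))"
    using k l by (simp add: index_mult_mat_sum index_blockproj)
  also have "\<dots> = blockproj d m i $$ (k,l)"
    using k l by (simp only: sum_delta_left) (auto simp: index_blockproj)
  finally show "(blockproj d m i * blockproj d m i) $$ (k,l) = blockproj d m i $$ (k,l)" .
qed simp_all

lemma msum_blockproj: "msum (d*m) (d*m) (blockproj d m) m = 1\<^sub>m (d*m)"
proof -
  have c: "\<forall>i<m. blockproj d m i \<in> carrier_mat (d*m) (d*m)" by simp
  show ?thesis unfolding msum_eq[OF c]
  proof (rule eq_matI)
    fix k l assume "k < dim_row (1\<^sub>m (d*m))" "l < dim_col (1\<^sub>m (d*m))"
    then have k: "k < d*m" and l: "l < d*m" by simp_all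
    have "(\<Sum>i<m. blockproj d m i $$ (k,l))
        = (\<Sum>i<m. if k div d = i \<and> (if k = l then k div d else m) = i then 1 else 0)"
      using k l by (intro sum.cong refl) (auto simp: index_blockproj)
    also have "\<dots> = (if k = l then 1 else 0)"
      using div_less_of_less_mult[OF k] by (simp add: sum_delta_two)
    finally show "mat (d*m) (d*m) (\<lambda>(k,l). \<Sum>i<m. blockproj d m i $$ (k,l)) $$ (k,l) = 1\<^sub>m (d*m) $$ (k,l)"
      using k l by simp
  qed simp_all
qed

lemma index_blockproj_sandwich:
  assumes X: "X \<in> carrier_mat (d*m) (d*m)" and k: "k < d*m" and l: "l < d*m"
  shows "(blockproj d m i * X * blockproj d m i) $$ (k,l)
       = (if k div d = i \<and> l div d = i then X$$(k,l) else 0)"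
proof -
  let ?P = "blockproj d m i"
  have PX: "(?P * X) $$ (k,q) = (if k div d = i then X$$(k,q) else 0)" if q: "q < d*m" for q
  proof -
    have "(?P * X) $$ (k,q) = (\<Sum>p<d*m. (if k = p \<and> k div d = i then 1 else 0) * X$$(p,q))"
      using k q X by (simp add: index_mult_mat_sum index_blockproj)
    also have "\<dots> = (if k div d = i then X$$(k,q) else 0)"
      using k by (simp only: sum_delta_left) simp
    finally show ?thesis .
  qed
  have "(?P * X * ?P) $$ (k,l) = (\<Sum>q<d*m. (?P * X) $$ (k,q) * (if q = l \<and> q div d = i then 1 else 0))"
    using k l X by (simp add: index_mult_mat_sum index_blockproj)
  also have "\<dots> = (\<Sum>q<d*m. (if k div d = i then X$$(k,q) else 0) * (if q = l \<and> q div d = i then 1 else 0))"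
    by (intro sum.cong refl) (simp add: PX)
  also have "\<dots> = (if k div d = i \<and> l div d = i then X$$(k,l) else 0)"
    using l by (simp only: sum_delta_right) simp
  finally show ?thesis .
qed

lemma pinching_eq:
  assumes X: "X \<in> carrier_mat (d*m) (d*m)"
  shows "pinching d m X = mat (d*m) (d*m) (\<lambda>(k,l). if k div d = l div d then X$$(k,l) else 0)"
proof -
  have c: "\<forall>i<m. blockproj d m i * X * blockproj d m i \<in> carrier_mat (d*m) (d*m)"
    using X by (simp add: mult_carrier_sq)
  show ?thesis unfolding pinching_def msum_eq[OF c]
  proof (rule eq_matI)
    fix k l assume "k < dim_row (mat (d*m) (d*m) (\<lambda>(k,l). if k div d = l div d then X$$(k,l) else 0))"
      "l < dim_col (mat (d*m) (d*m) (\<lambda>(k,l). if k div d = l div d then X$$(k,l) else 0))"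
    then have k: "k < d*m" and l: "l < d*m" by auto
    have "(\<Sum>i<m. (blockproj d m i * X * blockproj d m i) $$ (k,l))
       = (\<Sum>i<m. if k div d = i \<and> l div d = i then X$$(k,l) else 0)"
      by (intro sum.cong refl) (simp add: index_blockproj_sandwich[OF X k l])
    also have "\<dots> = (if k div d = l div d then X$$(k,l) else 0)"
      using div_less_of_less_mult[OF k] by (rule sum_delta_two)
    finally show "mat (d*m) (d*m) (\<lambda>(k,l). \<Sum>i<m. (blockproj d m i * X * blockproj d m i) $$ (k,l)) $$ (k,l)
      = mat (d*m) (d*m) (\<lambda>(k,l). if k div d = l div d then X$$(k,l) else 0) $$ (k,l)"
      using k l by simp
  qed auto
qed

lemma blockdiag_carrier [simp]: "blockdiag d m B \<in> carrier_mat (d*m) (d*m)"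
  unfolding blockdiag_def by simp

lemma dim_blockdiag [simp]: "dim_row (blockdiag d m B) = d*m" "dim_col (blockdiag d m B) = d*m"
  unfolding blockdiag_def by simp_all

lemma index_blockdiag:
  "k < d*m \<Longrightarrow> l < d*m \<Longrightarrow>
    blockdiag d m B $$ (k,l) = (if k div d = l div d then B (k div d) $$ (k mod d, l mod d) else 0)"
  unfolding blockdiag_def by simp

lemma ptrace_blockdiag_single:
  assumes i: "i < m" and D: "D \<in> carrier_mat d d"
  shows "ptrace d m (blockdiag d m (\<lambda>j. if j = i then D else 0\<^sub>m d d)) = D"
proof -
  let ?C = "blockdiag d m (\<lambda>j. if j = i then D else 0\<^sub>m d d)"
  have c: "\<forall>j<m. blk d ?C j j \<in> carrier_mat d d" unfolding blk_def by simp
  show ?thesis unfolding ptrace_def msum_eq[OF c]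
  proof (rule eq_carrier_matI[of _ d d])
    fix k l assume k: "k < d" and l: "l < d"
    have "(\<Sum>j<m. blk d ?C j j $$ (k,l)) = (\<Sum>j<m. if j = i then D $$ (k,l) else 0)"
      using block_index_less k l by (intro sum.cong refl) (simp add: blk_def index_blockdiag)
    also have "\<dots> = D $$ (k,l)" using i by simp
    finally show "mat d d (\<lambda>(k,l). \<Sum>j<m. blk d ?C j j $$ (k,l)) $$ (k,l) = D $$ (k,l)"
      using k l by simp
  qed (use D in simp_all)
qed

lemma ptrace_eq_of_pinching:
  assumes m: "m > 0" and B: "B \<in> carrier_mat (d*m) (d*m)" and D: "D \<in> carrier_mat d d"
    and pin: "pinching d m B = (1 / of_nat m) \<cdot>\<^sub>m blockdiag d m (\<lambda>_. D)"
  shows "ptrace d m B = D"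
proof -
  have c: "\<forall>j<m. blk d B j j \<in> carrier_mat d d" unfolding blk_def by simp
  show ?thesis unfolding ptrace_def msum_eq[OF c]
  proof (rule eq_carrier_matI[of _ d d])
    fix k l assume k: "k < d" and l: "l < d"
    have "(\<Sum>j<m. blk d B j j $$ (k,l)) = (\<Sum>j<m. D $$ (k,l) / of_nat m)"
    proof (intro sum.cong refl)
      fix j assume "j \<in> {..<m}"
      then have jk: "j*d + k < d*m" and jl: "j*d + l < d*m" using block_index_less k l by auto
      have "blk d B j j $$ (k,l) = pinching d m B $$ (j*d + k, j*d + l)"
        unfolding pinching_eq[OF B] blk_def using k l jk jl by simp
      then show "blk d B j j $$ (k,l) = D $$ (k,l) / of_nat m"
        unfolding pin using k l jk jl by (simp add: index_blockdiag)
    qed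
    also have "\<dots> = D $$ (k,l)" using m by simp
    finally show "mat d d (\<lambda>(k,l). \<Sum>j<m. blk d B j j $$ (k,l)) $$ (k,l) = D $$ (k,l)"
      using k l by simp
  qed (use D in simp_all)
qed

definition block_embedding :: "nat \<Rightarrow> nat \<Rightarrow> nat \<Rightarrow> complex mat" where
  "block_embedding d m i = mat (d*m) d (\<lambda>(k,r). if k = i*d + r then 1 else 0)"

lemma block_embedding_carrier [simp]: "block_embedding d m i \<in> carrier_mat (d*m) d"
  unfolding block_embedding_def by simp

lemma dim_block_embedding [simp]:
  "dim_row (block_embedding d m i) = d*m" "dim_col (block_embedding d m i) = d"
  unfolding block_embedding_def by simp_all

lemma block_embedding_mult_cadj: "block_embedding d m i * cadj (block_embedding d m i) = blockproj d m i"
proof (rule eq_matI)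
  fix k l assume "k < dim_row (blockproj d m i)" "l < dim_col (blockproj d m i)"
  then have k: "k < d*m" and l: "l < d*m" by simp_all
  have d0: "d > 0" using k by (cases "d = 0") simp_all
  have "(block_embedding d m i * cadj (block_embedding d m i)) $$ (k,l)
      = (\<Sum>r<d. (if k = i*d + r then 1 else 0) * (if l = i*d + r then 1 else 0))"
    using k l by (simp add: index_mult_mat_sum block_embedding_def if_distrib[of cnj] cong: if_cong)
  also have "\<dots> = (if k = l \<and> k div d = i then 1 else 0)"
  proof (cases "k div d = i")
    case True
    then have k_eq: "k = i*d + k mod d" by (metis div_mult_mod_eq)
    then have "(k = i*d + r) = (k mod d = r)" for r by linarith
    then have "(\<Sum>r<d. (if k = i*d + r then 1 else 0) * (if l = i*d + r then 1 else (0::complex)))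
        = (\<Sum>r<d. (if k mod d = r \<and> True then 1 else 0) * (if l = i*d + r then 1 else 0))"
      by simp
    also have "\<dots> = (if l = i*d + k mod d then 1 else 0)"
      using k by (simp only: sum_delta_left) (simp add: d0)
    finally show ?thesis using True k_eq by auto
  next
    case False
    then have "(if k = i*d + r then 1 else (0::complex)) = 0" if "r < d" for r
      using that by auto
    then show ?thesis using False by simp
  qed
  also have "\<dots> = blockproj d m i $$ (k,l)" using k l by (simp add: index_blockproj)
  finally show "(block_embedding d m i * cadj (block_embedding d m i)) $$ (k,l) = blockproj d m i $$ (k,l)" .
qed simp_all

subsection \<open>The block Fourier matrix\<close>

lemma cis_root_of_unity_ne_1:
  fixes k l m :: nat
  assumes "k < m" "l < m" "k \<noteq> l"
  shows "cis (2 * pi * (real l - real k) / real m) \<noteq> 1"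
proof
  assume c: "cis (2 * pi * (real l - real k) / real m) = 1"
  have "cos (2 * pi * (real l - real k) / real m) = 1"
    using arg_cong[OF c, of Re] by simp
  then obtain n :: int where n: "2 * pi * (real l - real k) / real m = of_int n * 2 * pi"
    using cos_one_2pi_int by blast
  have "real m > 0" using assms by simp
  with n have "2 * pi * (real l - real k) = 2 * pi * (of_int n * real m)"
    by (simp add: field_simps)
  then have "real l - real k = of_int n * real m" using pi_gt_zero by simp
  then have e: "int l - int k = n * int m"
    by (metis of_int_eq_iff of_int_mult of_int_diff of_int_of_nat_eq)
  show False
  proof (cases "n = 0")
    case True
    with e assms show False by simp
  next
    case False
    then have "\<bar>n\<bar> \<ge> 1" by linarith
    then have "\<bar>n * int m\<bar> \<ge> int m" by (simp add: abs_mult mult_le_cancel_right1)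
    moreover have "\<bar>int l - int k\<bar> < int m" using assms by linarith
    ultimately show False using e by simp
  qed
qed

lemma sum_roots_of_unity_orthogonal:
  fixes k l m :: nat
  assumes "k < m" "l < m"
  shows "(\<Sum>a<m. cnj (cis (2*pi*real a*real k/real m)) * cis (2*pi*real a*real l/real m))
         = (if k = l then of_nat m else 0)"
proof -
  define z where "z = cis (2 * pi * (real l - real k) / real m)"
  have t: "cnj (cis (2*pi*real a*real k/real m)) * cis (2*pi*real a*real l/real m) = z ^ a" for a
  proof -
    have "- (2*pi*real a*real k/real m) + 2*pi*real a*real l/real m
        = real a * (2 * pi * (real l - real k) / real m)"
      by (simp add: algebra_simps diff_divide_distrib)
    then show ?thesis unfolding z_def by (simp add: cis_cnj cis_mult DeMoivre)
  qed
  show ?thesis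
  proof (cases "k = l")
    case True
    then show ?thesis unfolding t z_def by simp
  next
    case False
    have "real m > 0" using assms by simp
    then have "z ^ m = cis (2 * pi * (real l - real k))"
      unfolding z_def DeMoivre by simp
    also have "\<dots> = 1" by (simp add: Ints_diff)
    finally have "z ^ m = 1" .
    moreover have "(\<Sum>a<m. z ^ a) = (z ^ m - 1) / (z - 1)"
      by (rule geometric_sum[OF cis_root_of_unity_ne_1[OF assms False, folded z_def]])
    ultimately show ?thesis unfolding t using False by simp
  qed
qed

lemma sum_residue_class:
  fixes d m r :: nat and f :: "nat \<Rightarrow> 'a::comm_monoid_add"
  assumes "r < d"
  shows "(\<Sum>p<d*m. if p mod d = r then f p else 0) = (\<Sum>a<m. f (a*d + r))"
proof (induction m)
  case (Suc m)
  have split: "(\<Sum>p<d*Suc m. g p) = (\<Sum>p<d*m. g p) + (\<Sum>a<d. g (d*m+a))" for g :: "nat \<Rightarrow> 'a"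
    using sum_lessThan_split[of "d*m" "d*Suc m" g] by simp
  have "(\<Sum>a<d. if (d*m+a) mod d = r then f (d*m+a) else 0) = f (m*d + r)"
    using assms by (simp add: mult.commute cong: if_cong)
  then show ?case using Suc assms unfolding split by simp
qed simp

text \<open>\<open>F\<^sub>m \<otimes> I\<^sub>d\<close>, with \<open>F\<^sub>m\<close> the unitary discrete Fourier matrix of order \<open>m\<close>.\<close>

definition block_fourier :: "nat \<Rightarrow> nat \<Rightarrow> complex mat" where
  "block_fourier d m = mat (d*m) (d*m) (\<lambda>(p,c). if p mod d = c mod d then
     cis (2*pi*real (p div d)*real (c div d)/real m) / complex_of_real (sqrt (real m)) else 0)"

lemma block_fourier_carrier [simp]: "block_fourier d m \<in> carrier_mat (d*m) (d*m)"
  unfolding block_fourier_def by simp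

lemma dim_block_fourier [simp]:
  "dim_row (block_fourier d m) = d*m" "dim_col (block_fourier d m) = d*m"
  unfolding block_fourier_def by simp_all

lemma cnj_block_fourier_mult:
  assumes p: "p < d*m" and k: "k < d*m" and l: "l < d*m"
  shows "cnj (block_fourier d m $$ (p,k)) * block_fourier d m $$ (p,l) =
    (if k mod d = l mod d then (if p mod d = k mod d then
       cnj (cis (2*pi*real (p div d)*real (k div d)/real m))
         * cis (2*pi*real (p div d)*real (l div d)/real m) / of_nat m
     else 0) else 0)"
proof -
  have "real m > 0" using p by (cases "m = 0") simp_all
  then have "cnj (complex_of_real (sqrt (real m))) * complex_of_real (sqrt (real m)) = of_nat m"
    by (simp flip: of_real_mult)
  then show ?thesis unfolding block_fourier_def using p k l by (auto simp: divide_simps)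
qed

lemma block_fourier_unitary:
  assumes m: "m > 0"
  shows "unitary_mat (d*m) (block_fourier d m)"
proof (rule unitary_matI_left)
  let ?F = "block_fourier d m"
  show F: "?F \<in> carrier_mat (d*m) (d*m)" by simp
  show "cadj ?F * ?F = 1\<^sub>m (d*m)"
  proof (rule eq_carrier_matI[of _ "d*m" "d*m"])
    fix k l assume k: "k < d*m" and l: "l < d*m"
    have d: "d > 0" using k by (cases "d = 0") simp_all
    define T where "T p = cnj (cis (2*pi*real (p div d)*real (k div d)/real m))
      * cis (2*pi*real (p div d)*real (l div d)/real m) / of_nat m" for p
    have "(cadj ?F * ?F) $$ (k,l) = (\<Sum>p<d*m. cnj (?F $$ (p,k)) * ?F $$ (p,l))"
      using k l by (simp add: index_mult_mat_sum)
    also have "\<dots> = (\<Sum>p<d*m. if k mod d = l mod d then (if p mod d = k mod d then T p else 0) else 0)"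
      using k l unfolding T_def by (intro sum.cong refl) (simp add: cnj_block_fourier_mult)
    also have "\<dots> = (if k mod d = l mod d \<and> k div d = l div d then 1 else 0)"
    proof (cases "k mod d = l mod d")
      case True
      have "(\<Sum>p<d*m. if p mod d = k mod d then T p else 0) = (\<Sum>a<m. T (a*d + k mod d))"
        using d by (intro sum_residue_class) simp
      also have "\<dots> = (\<Sum>a<m. cnj (cis (2*pi*real a*real (k div d)/real m))
          * cis (2*pi*real a*real (l div d)/real m)) / of_nat m"
        unfolding T_def using d by (simp add: sum_divide_distrib)
      also have "\<dots> = (if k div d = l div d then 1 else 0)"
        using sum_roots_of_unity_orthogonal[OF div_less_of_less_mult[OF k] div_less_of_less_mult[OF l]] m
        by simp
      finally show ?thesis using True by simp
    qed simp
    also have "\<dots> = 1\<^sub>m (d*m) $$ (k,l)"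
      using k l by (metis div_mult_mod_eq index_one_mat(1))
    finally show "(cadj ?F * ?F) $$ (k,l) = 1\<^sub>m (d*m) $$ (k,l)" .
  qed (use F in \<open>simp_all add: mult_carrier_sq cadj_carrier_mat\<close>)
qed

lemma index_block_fourier_conj_diag:
  assumes k: "k < d*m" and l: "l < d*m" and kl: "k div d = l div d"
  shows "(cadj (block_fourier d m) * mat_diag (d*m) (\<lambda>p. complex_of_real (lam p)) * block_fourier d m) $$ (k,l)
       = (if k mod d = l mod d then complex_of_real (\<Sum>a<m. lam (a*d + k mod d)) / of_nat m else 0)"
proof -
  let ?F = "block_fourier d m"
  have d: "d > 0" using k by (cases "d = 0") simp_all
  have "(cadj ?F * mat_diag (d*m) (\<lambda>p. complex_of_real (lam p)) * ?F) $$ (k,l)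
      = (\<Sum>p<d*m. complex_of_real (lam p) * (cnj (?F $$ (p,k)) * ?F $$ (p,l)))"
    using index_mult_mat_diag_cadj[of "cadj ?F" "d*m" k l] k l by (simp add: cadj_carrier_mat mult_ac)
  also have "\<dots> = (\<Sum>p<d*m. if k mod d = l mod d then
      (if p mod d = k mod d then complex_of_real (lam p) / of_nat m else 0) else 0)"
    using k l kl by (intro sum.cong refl) (simp add: cnj_block_fourier_mult cis_cnj cis_mult)
  also have "\<dots> = (if k mod d = l mod d then complex_of_real (\<Sum>a<m. lam (a*d + k mod d)) / of_nat m else 0)"
    using d by (simp add: sum_residue_class sum_divide_distrib)
  finally show ?thesis by simp
qed

lemma exists_unitary_pinching_uniform:
  assumes m: "m > 0" and A: "psd_mat (d*m) A"
  shows "\<exists>U D. unitary_mat (d*m) U \<and> psd_mat d D \<and>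
            pinching d m (cadj U * A * U) = (1 / of_nat m) \<cdot>\<^sub>m blockdiag d m (\<lambda>_. D)"
proof -
  obtain W lam where W: "unitary_mat (d*m) W" and lam: "\<forall>k<d*m. lam k \<ge> (0::real)"
    and AW: "A = W * mat_diag (d*m) (\<lambda>k. complex_of_real (lam k)) * cadj W"
    using psd_spectral_decomposition[OF A] by blast
  define F where "F = block_fourier d m"
  have F: "unitary_mat (d*m) F" unfolding F_def by (rule block_fourier_unitary[OF m])
  define L where "L = mat_diag (d*m) (\<lambda>k. complex_of_real (lam k))"
  have L: "L \<in> carrier_mat (d*m) (d*m)" unfolding L_def by simp
  have "cadj W * A * W = L"
    unfolding AW L_def[symmetric] using unitary_matD[OF W] L
    by (simp add: assoc_mult_sq mult_carrier_sq unitary_cadj_mult_cancel[OF W])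
  then have UAU: "cadj (W * F) * A * (W * F) = cadj F * L * F"
    using unitary_conj_conj[OF W F] A unfolding psd_mat_def by simp
  have M: "cadj F * L * F \<in> carrier_mat (d*m) (d*m)"
    using unitary_matD[OF F] L by (simp add: mult_carrier_sq)
  define D where "D = mat_diag d (\<lambda>r. complex_of_real (\<Sum>a<m. lam (a*d + r)))"
  have "psd_mat d D" unfolding D_def
    using lam block_index_less by (intro psd_mat_diag allI impI sum_nonneg) simp
  moreover have "pinching d m (cadj (W * F) * A * (W * F)) = (1 / of_nat m) \<cdot>\<^sub>m blockdiag d m (\<lambda>_. D)"
    unfolding UAU pinching_eq[OF M]
  proof (rule eq_matI)
    fix k l assume "k < dim_row ((1 / of_nat m) \<cdot>\<^sub>m blockdiag d m (\<lambda>_. D))"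
      "l < dim_col ((1 / of_nat m) \<cdot>\<^sub>m blockdiag d m (\<lambda>_. D))"
    then have k: "k < d*m" and l: "l < d*m" by auto
    then have "d > 0" by (cases "d = 0") simp_all
    then show "mat (d*m) (d*m) (\<lambda>(k,l). if k div d = l div d then (cadj F * L * F) $$ (k,l) else 0) $$ (k,l)
        = ((1 / of_nat m) \<cdot>\<^sub>m blockdiag d m (\<lambda>_. D)) $$ (k,l)"
      using k l unfolding F_def L_def
      by (simp add: index_blockdiag index_block_fourier_conj_diag D_def)
  qed simp_all
  ultimately show ?thesis using unitary_mat_mult[OF W F] by blast
qed

subsection \<open>The block Gram decomposition\<close>

lemma smult_mult_cadj_smult:
  assumes M: "M \<in> carrier_mat r p"
  shows "(c \<cdot>\<^sub>m M) * cadj (c \<cdot>\<^sub>m M) = (c * cnj c) \<cdot>\<^sub>m (M * cadj M)"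
proof (rule eq_matI)
  fix i j assume "i < dim_row ((c * cnj c) \<cdot>\<^sub>m (M * cadj M))" "j < dim_col ((c * cnj c) \<cdot>\<^sub>m (M * cadj M))"
  then show "((c \<cdot>\<^sub>m M) * cadj (c \<cdot>\<^sub>m M)) $$ (i,j) = ((c * cnj c) \<cdot>\<^sub>m (M * cadj M)) $$ (i,j)"
    using M by (simp add: index_mult_mat_sum sum_distrib_left mult_ac)
qed (use M in simp_all)

lemma cadj_smult_mult_smult:
  assumes M: "M \<in> carrier_mat r p"
  shows "cadj (c \<cdot>\<^sub>m M) * (c \<cdot>\<^sub>m M) = (cnj c * c) \<cdot>\<^sub>m (cadj M * M)"
proof (rule eq_matI)
  fix i j assume "i < dim_row ((cnj c * c) \<cdot>\<^sub>m (cadj M * M))" "j < dim_col ((cnj c * c) \<cdot>\<^sub>m (cadj M * M))"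
  then show "(cadj (c \<cdot>\<^sub>m M) * (c \<cdot>\<^sub>m M)) $$ (i,j) = ((cnj c * c) \<cdot>\<^sub>m (cadj M * M)) $$ (i,j)"
    using M by (simp add: index_mult_mat_sum sum_distrib_left mult_ac)
qed (use M in simp_all)

lemma mult_cadj_mult:
  assumes M: "M \<in> carrier_mat r p" and E: "E \<in> carrier_mat p q"
  shows "(M * E) * cadj (M * E) = M * (E * cadj E) * cadj M"
proof -
  have E': "cadj E \<in> carrier_mat q p" and M': "cadj M \<in> carrier_mat p r"
    using E M by (simp_all add: cadj_carrier_mat)
  show ?thesis
    using M E E' M' by (simp add: cadj_mult[OF M E] assoc_mult_mat[of _ r p _ q _ r]
        assoc_mult_mat[of _ p q _ p _ r] assoc_mult_mat[of _ r p _ p _ r] mult_carrier_mat[of _ q p _ r])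
qed

lemma mult_smult_sandwich:
  fixes A M C :: "complex mat"
  assumes "A \<in> carrier_mat n n" "M \<in> carrier_mat n n" "C \<in> carrier_mat n n"
  shows "A * (c \<cdot>\<^sub>m M) * C = c \<cdot>\<^sub>m (A * M * C)"
  using mult_smult_assoc_mat[OF mult_carrier_mat[OF assms(1,2)] assms(3)]
  by (simp add: mult_smult_distrib[OF assms(1,2)])

lemma pinching_blockproj_sandwich:
  assumes B: "B \<in> carrier_mat (d*m) (d*m)" and D: "D \<in> carrier_mat d d" and m: "m > 0"
    and pin: "pinching d m B = (1 / of_nat m) \<cdot>\<^sub>m blockdiag d m (\<lambda>_. D)"
  shows "of_nat m \<cdot>\<^sub>m (blockproj d m i * B * blockproj d m i)
       = blockdiag d m (\<lambda>j. if j = i then D else 0\<^sub>m d d)"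
proof (rule eq_matI)
  fix k l assume "k < dim_row (blockdiag d m (\<lambda>j. if j = i then D else 0\<^sub>m d d))"
    "l < dim_col (blockdiag d m (\<lambda>j. if j = i then D else 0\<^sub>m d d))"
  then have k: "k < d*m" and l: "l < d*m" by simp_all
  then have "k mod d < d" "l mod d < d" by (cases "d = 0"; simp)+
  moreover have "B $$ (k,l) = D $$ (k mod d, l mod d) / of_nat m" if "k div d = l div d"
    using arg_cong[OF pin, of "\<lambda>M. M $$ (k,l)"] k l that
    unfolding pinching_eq[OF B] by (simp add: index_blockdiag)
  ultimately show "(of_nat m \<cdot>\<^sub>m (blockproj d m i * B * blockproj d m i)) $$ (k,l)
      = blockdiag d m (\<lambda>j. if j = i then D else 0\<^sub>m d d) $$ (k,l)"
    using k l m by (auto simp: index_blockproj_sandwich[OF B k l] index_blockdiag)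
qed simp_all

lemma blockproj_idem_left:
  "X \<in> carrier_mat (d*m) c \<Longrightarrow> blockproj d m i * (blockproj d m i * X) = blockproj d m i * X"
  by (metis assoc_mult_mat blockproj_carrier blockproj_idem)

lemma block_embedding_gram:
  assumes M: "M \<in> carrier_mat (d*m) (d*m)"
  shows "(M * blockproj d m i * block_embedding d m i) * cadj (M * blockproj d m i * block_embedding d m i)
       = (M * blockproj d m i) * cadj (M * blockproj d m i)"
proof -
  have MP: "M * blockproj d m i \<in> carrier_mat (d*m) (d*m)" using M by (simp add: mult_carrier_sq)
  have "M * blockproj d m i * blockproj d m i = M * blockproj d m i"
    using M by (simp add: assoc_mult_sq blockproj_idem)
  then show ?thesis
    by (simp add: mult_cadj_mult[OF MP block_embedding_carrier] block_embedding_mult_cadj)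
qed

lemma msum_blockproj_gram:
  assumes M: "M \<in> carrier_mat (d*m) (d*m)"
  shows "msum (d*m) (d*m) (\<lambda>i. (M * blockproj d m i) * cadj (M * blockproj d m i)) m = M * cadj M"
proof -
  have M': "cadj M \<in> carrier_mat (d*m) (d*m)" using M by (rule cadj_carrier_mat)
  have "(M * blockproj d m i) * cadj (M * blockproj d m i) = M * blockproj d m i * cadj M" for i
    using M M' by (simp add: cadj_mult_sq assoc_mult_sq mult_carrier_sq blockproj_idem_left)
  then have "msum (d*m) (d*m) (\<lambda>i. (M * blockproj d m i) * cadj (M * blockproj d m i)) m
      = msum (d*m) (d*m) (\<lambda>i. M * blockproj d m i * cadj M) m"
    by presburger
  also have "\<dots> = M * msum (d*m) (d*m) (blockproj d m) m * cadj M"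
    using M M' by (intro msum_sandwich) simp_all
  also have "\<dots> = M * cadj M" using M by (simp add: msum_blockproj)
  finally show ?thesis .
qed

lemma exists_gram_factor:
  assumes A: "psd_mat n A" and U: "unitary_mat n U" and r: "r \<ge> 0"
  shows "\<exists>M. M \<in> carrier_mat n n \<and> M * cadj M = complex_of_real r \<cdot>\<^sub>m A \<and>
            cadj M * M = complex_of_real r \<cdot>\<^sub>m (cadj U * A * U)"
proof -
  note u = unitary_matD[OF U]
  obtain S where S: "S \<in> carrier_mat n n" "cadj S = S" "S * S = A"
    using psd_sqrt[OF A] by blast
  define c where "c = complex_of_real (sqrt r)"
  have c: "c * cnj c = complex_of_real r" "cnj c * c = complex_of_real r"
    unfolding c_def using r by (simp_all flip: of_real_mult)
  have SU: "S * U \<in> carrier_mat n n" using S u by (simp add: mult_carrier_sq)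
  have "(S * U) * cadj (S * U) = A"
    unfolding S(3)[symmetric] using S(1,2) u
    by (simp add: cadj_mult_sq assoc_mult_sq mult_carrier_sq unitary_mult_cadj_cancel[OF U])
  moreover have "cadj (S * U) * (S * U) = cadj U * A * U"
    unfolding S(3)[symmetric] using S(1,2) u by (simp add: cadj_mult_sq assoc_mult_sq mult_carrier_sq)
  ultimately show ?thesis
    using SU smult_mult_cadj_smult[OF SU, of c] cadj_smult_mult_smult[OF SU, of c] c
    by (intro exI[of _ "c \<cdot>\<^sub>m (S * U)"]) simp
qed

lemma block_gram_unitarily_block_diagonal:
  fixes i :: nat
  assumes M: "M \<in> carrier_mat (d*m) (d*m)" and B: "B \<in> carrier_mat (d*m) (d*m)"
    and D: "D \<in> carrier_mat d d" and m: "m > 0" and MB: "cadj M * M = of_nat m \<cdot>\<^sub>m B"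
    and pin: "pinching d m B = (1 / of_nat m) \<cdot>\<^sub>m blockdiag d m (\<lambda>_. D)"
  defines "X \<equiv> M * blockproj d m i * block_embedding d m i"
  shows "\<exists>V. unitary_mat (d*m) V \<and>
           cadj V * X * cadj X * V = blockdiag d m (\<lambda>j. if j = i then D else 0\<^sub>m d d)"
proof -
  let ?n = "d*m" and ?P = "blockproj d m i"
  have MP: "M * ?P \<in> carrier_mat ?n ?n" using M by (simp add: mult_carrier_sq)
  obtain V where V: "unitary_mat ?n V"
    and sim: "cadj V * ((M * ?P) * cadj (M * ?P)) * V = cadj (M * ?P) * (M * ?P)"
    using unitarily_similar_mult_cadj[OF MP] by blast
  note v = unitary_matD[OF V]
  have X: "X \<in> carrier_mat ?n d" unfolding X_def using MP by simp
  have "cadj V * X * cadj X * V = cadj V * (X * cadj X) * V"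
    using v X cadj_carrier_mat[OF X]
    by (simp add: assoc_mult_mat[of _ ?n ?n _ d _ ?n] mult_carrier_mat[of _ ?n ?n _ d])
  also have "\<dots> = cadj (M * ?P) * (M * ?P)"
    unfolding X_def block_embedding_gram[OF M] sim ..
  also have "\<dots> = ?P * (cadj M * M) * ?P"
    using M cadj_carrier_mat[OF M]
    by (simp add: cadj_mult_sq[where n="d*m"] assoc_mult_sq[where n="d*m"] mult_carrier_sq)
  also have "\<dots> = of_nat m \<cdot>\<^sub>m (?P * B * ?P)"
    unfolding MB by (rule mult_smult_sandwich[OF blockproj_carrier B blockproj_carrier])
  also have "\<dots> = blockdiag d m (\<lambda>j. if j = i then D else 0\<^sub>m d d)"
    by (rule pinching_blockproj_sandwich[OF B D m pin])
  finally show ?thesis using V by blast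
qed

lemma exists_block_gram_decomposition:
  assumes m: "m > 0" and A: "psd_mat (d*m) A" and U: "unitary_mat (d*m) U" and D: "psd_mat d D"
    and pin: "pinching d m (cadj U * A * U) = (1 / of_nat m) \<cdot>\<^sub>m blockdiag d m (\<lambda>_. D)"
  shows "\<exists>X Us. (\<forall>i<m. X i \<in> carrier_mat (d*m) d \<and> unitary_mat (d*m) (Us i)) \<and>
           A = (1 / of_nat m) \<cdot>\<^sub>m msum (d*m) (d*m) (\<lambda>i. X i * cadj (X i)) m \<and>
           (\<forall>i<m. cadj (Us i) * X i * cadj (X i) * Us i = blockdiag d m (\<lambda>j. if j = i then D else 0\<^sub>m d d) \<and>
              ptrace d m (cadj (Us i) * X i * cadj (X i) * Us i) = ptrace d m (cadj U * A * U))"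
proof -
  let ?n = "d*m"
  have Dc: "D \<in> carrier_mat d d" using D unfolding psd_mat_def by blast
  have B: "cadj U * A * U \<in> carrier_mat ?n ?n"
    using unitary_matD[OF U] A unfolding psd_mat_def by (simp add: mult_carrier_sq)
  obtain M where M: "M \<in> carrier_mat ?n ?n" and MM: "M * cadj M = of_nat m \<cdot>\<^sub>m A"
    and M'M: "cadj M * M = of_nat m \<cdot>\<^sub>m (cadj U * A * U)"
    using exists_gram_factor[OF A U, of "real m"] by auto
  define X where "X i = M * blockproj d m i * block_embedding d m i" for i
  have X: "X i \<in> carrier_mat ?n d" for i
    unfolding X_def using M by (intro mult_carrier_mat[OF _ block_embedding_carrier]) (simp add: mult_carrier_sq)
  have sum: "A = (1 / of_nat m) \<cdot>\<^sub>m msum ?n ?n (\<lambda>i. X i * cadj (X i)) m"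
    unfolding X_def block_embedding_gram[OF M] msum_blockproj_gram[OF M] MM using m by (auto intro: eq_matI)
  have "\<forall>i. \<exists>V. unitary_mat ?n V \<and>
      cadj V * X i * cadj (X i) * V = blockdiag d m (\<lambda>j. if j = i then D else 0\<^sub>m d d)"
    unfolding X_def using block_gram_unitarily_block_diagonal[OF M B Dc m M'M pin] by blast
  from choice[OF this] obtain Us where Us: "\<And>i. unitary_mat ?n (Us i)"
    and conj: "\<And>i. cadj (Us i) * X i * cadj (X i) * Us i = blockdiag d m (\<lambda>j. if j = i then D else 0\<^sub>m d d)"
    by blast
  have "ptrace d m (cadj U * A * U) = D" by (rule ptrace_eq_of_pinching[OF m B Dc pin])
  then have pt: "ptrace d m (cadj (Us i) * X i * cadj (X i) * Us i) = ptrace d m (cadj U * A * U)"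
    if "i < m" for i
    unfolding conj using ptrace_blockdiag_single[OF that Dc] by simp
  show ?thesis
    using X Us sum conj pt by (intro exI[of _ X] exI[of _ Us] conjI allI impI) simp_all
qed

theorem proposition4p9:
  fixes d m :: nat and A :: "complex mat"
  assumes "m > 0"
    and "A \<in> carrier_mat (d*m) (d*m)"
    and "psd_mat (d*m) A"
  shows "(\<exists>U D. unitary_mat (d*m) U \<and> psd_mat d D \<and>
            pinching d m (cadj U * A * U) = (1 / of_nat m) \<cdot>\<^sub>m blockdiag d m (\<lambda>_. D))
     \<and> (\<forall>U D. unitary_mat (d*m) U \<and> psd_mat d D \<and>
            pinching d m (cadj U * A * U) = (1 / of_nat m) \<cdot>\<^sub>m blockdiag d m (\<lambda>_. D) \<longrightarrow>
          (\<exists>X Us. (\<forall>i<m. X i \<in> carrier_mat (d*m) d \<and> unitary_mat (d*m) (Us i)) \<and>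
             A = (1 / of_nat m) \<cdot>\<^sub>m msum (d*m) (d*m) (\<lambda>i. X i * cadj (X i)) m \<and>
             (\<forall>i<m. cadj (Us i) * X i * cadj (X i) * Us i
                       = blockdiag d m (\<lambda>j. if j = i then D else 0\<^sub>m d d) \<and>
                     ptrace d m (cadj (Us i) * X i * cadj (X i) * Us i)
                       = ptrace d m (cadj U * A * U))))"
proof (intro conjI allI impI, goal_cases)
  case 1
  show ?case by (rule exists_unitary_pinching_uniform[OF assms(1,3)])
next
  case (2 U D)
  then show ?case by (intro exists_block_gram_decomposition[OF assms(1,3)]) blast+
qed

end
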